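(* Under the setting of the context, the function $v(i,y)=\sum_{n\ge0}\sum_{j\in E}P^n(i,j)g(j,y)$ is well defined, bounded by $\Gamma(1-c)^{-1}$, and twice continuously differentiable in $y$ with bounded derivatives. In particular, $v$ is Lipschitz continuous in $y$, uniformly in $i\in E$.
   Context: Let $d\ge1$, $(e_1,\dots,e_d)$ the canonical basis of $\mathbb R^d$, $\mathcal V=\{\pm e_1,\dots,\pm e_d\}$. Let $E$ be a finite set and $P$ an irreducible and aperiodic stochastic matrix on $E$ with unique invariant probability $\mu$; let $\Gamma>0$ and $c\in(0,1)$ be constants such that $\sum_{j\in E}|P^n(i,j)-\mu(j)|\le\Gamma c^n$ for all $n\ge0$, $i\in E$. For each $k\in E$, $y\in\mathbb R^d$, $p(k,y,\cdot)$ is a probability on $\mathcal V$, with $y\mapsto p(k,y,u)$ twice continuously differentiable with bounded derivatives. Let $g(k,y)=\sum_{u\in\mathcal V}u\,p(k,y,u)$ and assume $\sum_k\mu(k)g(k,y)=0$ for all $y\in\mathbb R^d$. *)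

theory Defs
  imports "HOL-Analysis.Analysis"
begin

fun matpow :: "('e::finite \<Rightarrow> 'e \<Rightarrow> real) \<Rightarrow> nat \<Rightarrow> 'e \<Rightarrow> 'e \<Rightarrow> real" where
  "matpow P 0 = (\<lambda>i j. if i = j then 1 else 0)"
| "matpow P (Suc n) = (\<lambda>i j. \<Sum>k\<in>UNIV. matpow P n i k * P k j)"

definition stochastic :: "('e::finite \<Rightarrow> 'e \<Rightarrow> real) \<Rightarrow> bool" where
  "stochastic P \<longleftrightarrow> (\<forall>i j. 0 \<le> P i j) \<and> (\<forall>i. (\<Sum>j\<in>UNIV. P i j) = 1)"

definition irreducible_mat :: "('e::finite \<Rightarrow> 'e \<Rightarrow> real) \<Rightarrow> bool" where
  "irreducible_mat P \<longleftrightarrow> (\<forall>i j. \<exists>n. 0 < matpow P n i j)"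

definition aperiodic_mat :: "('e::finite \<Rightarrow> 'e \<Rightarrow> real) \<Rightarrow> bool" where
  "aperiodic_mat P \<longleftrightarrow> (\<forall>i. Gcd {n. 0 < n \<and> 0 < matpow P n i i} = (1::nat))"

definition invariant_prob :: "('e::finite \<Rightarrow> 'e \<Rightarrow> real) \<Rightarrow> ('e \<Rightarrow> real) \<Rightarrow> bool" where
  "invariant_prob P \<mu> \<longleftrightarrow> (\<forall>j. 0 \<le> \<mu> j) \<and> (\<Sum>j\<in>UNIV. \<mu> j) = 1 \<and>
     (\<forall>j. (\<Sum>i\<in>UNIV. \<mu> i * P i j) = \<mu> j)"

definition steps :: "'a::euclidean_space set" where
  "steps = Basis \<union> uminus ` Basis"

definition drift :: "('e \<Rightarrow> 'a::euclidean_space \<Rightarrow> 'a \<Rightarrow> real) \<Rightarrow> 'e \<Rightarrow> 'a \<Rightarrow> 'a" where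
  "drift p k y = (\<Sum>u\<in>steps. p k y u *\<^sub>R u)"

definition C2_bounded_derivs :: "('a::euclidean_space \<Rightarrow> 'b::real_normed_vector) \<Rightarrow> bool" where
  "C2_bounded_derivs f \<longleftrightarrow>
     (\<exists>(D1 :: 'a \<Rightarrow> 'a \<Rightarrow>\<^sub>L 'b) (D2 :: 'a \<Rightarrow> 'a \<Rightarrow>\<^sub>L ('a \<Rightarrow>\<^sub>L 'b)).
        (\<forall>y. (f has_derivative blinfun_apply (D1 y)) (at y)) \<and>
        (\<forall>y. (D1 has_derivative blinfun_apply (D2 y)) (at y)) \<and>
        continuous_on UNIV D2 \<and> bounded (range D1) \<and> bounded (range D2))"

definition vfun :: "('e::finite \<Rightarrow> 'e \<Rightarrow> real) \<Rightarrow> ('e \<Rightarrow> 'a::euclidean_space \<Rightarrow> 'a \<Rightarrow> real)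
     \<Rightarrow> 'e \<Rightarrow> 'a \<Rightarrow> 'a" where
  "vfun P p i y = (\<Sum>n. \<Sum>j\<in>UNIV. matpow P n i j *\<^sub>R drift p j y)"

end

theory Submission
  imports Defs
begin

text \<open>Since \<open>\<mu>\<close> averages the drift to zero, the \<open>n\<close>-th term of the series equals
  \<open>\<Sum>\<^sub>j (P\<^sup>n(i,j) - \<mu>(j)) g(j,y)\<close>, whose norm is at most \<open>\<Gamma> c\<^sup>n\<close> because \<open>|g| \<le> 1\<close>. Hence the
  series converges geometrically, and summing first over \<open>n\<close> exhibits \<open>v(i,\<cdot>)\<close> as a finite
  linear combination of the drifts \<open>g(j,\<cdot>)\<close> with the entries of the deviation matrix
  \<open>\<Sum>\<^sub>n (P\<^sup>n - \<Pi>)\<close> as coefficients. Smoothness and the Lipschitz bound are inherited from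
  the \<open>p(k,\<cdot>,u)\<close>, which are \<open>C\<^sup>2\<close> with bounded derivatives.\<close>

lemma C2_bounded_derivs_bounded_linear:
  fixes f :: "'a::euclidean_space \<Rightarrow> 'b::real_normed_vector"
    and L :: "'b \<Rightarrow> 'c::real_normed_vector"
  assumes f: "C2_bounded_derivs f" and L: "bounded_linear L"
  shows "C2_bounded_derivs (\<lambda>y. L (f y))"
proof -
  obtain D1 :: "'a \<Rightarrow> 'a \<Rightarrow>\<^sub>L 'b" and D2 :: "'a \<Rightarrow> 'a \<Rightarrow>\<^sub>L ('a \<Rightarrow>\<^sub>L 'b)" where
    d1: "\<And>y. (f has_derivative blinfun_apply (D1 y)) (at y)" and
    d2: "\<And>y. (D1 has_derivative blinfun_apply (D2 y)) (at y)" and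
    c2: "continuous_on UNIV D2" and b1: "bounded (range D1)" and b2: "bounded (range D2)"
    using f unfolding C2_bounded_derivs_def by blast
  define L_blin where "L_blin = Blinfun L"
  have L_blin: "blinfun_apply L_blin = L"
    using L by (simp add: L_blin_def bounded_linear_Blinfun_apply)
  define comp_L where "comp_L = (\<lambda>X::'a \<Rightarrow>\<^sub>L 'b. L_blin o\<^sub>L X)"
  have comp_L: "bounded_linear comp_L"
    unfolding comp_L_def by (rule bounded_bilinear.bounded_linear_right[OF bounded_bilinear_blinfun_compose])
  define comp_L_blin where "comp_L_blin = Blinfun comp_L"
  have comp_L_blin: "blinfun_apply comp_L_blin = comp_L"
    using comp_L by (simp add: comp_L_blin_def bounded_linear_Blinfun_apply)
  have post_comp_L_blin: "bounded_linear (\<lambda>X::'a \<Rightarrow>\<^sub>L ('a \<Rightarrow>\<^sub>L 'b). comp_L_blin o\<^sub>L X)"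
    by (rule bounded_bilinear.bounded_linear_right[OF bounded_bilinear_blinfun_compose])
  define E1 where "E1 = (\<lambda>y. comp_L (D1 y))"
  define E2 where "E2 = (\<lambda>y. comp_L_blin o\<^sub>L D2 y)"
  have "((\<lambda>y. L (f y)) has_derivative blinfun_apply (E1 y)) (at y)" for y
  proof -
    have "blinfun_apply (E1 y) = (\<lambda>h. L (D1 y h))"
      by (auto simp: E1_def comp_L_def L_blin)
    then show ?thesis
      using bounded_linear.has_derivative[OF L d1] by simp
  qed
  moreover have "(E1 has_derivative blinfun_apply (E2 y)) (at y)" for y
  proof -
    have "blinfun_apply (E2 y) = (\<lambda>h. comp_L (D2 y h))"
      by (auto simp: E2_def comp_L_blin)
    then show ?thesis
      using bounded_linear.has_derivative[OF comp_L d2] by (simp add: E1_def)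
  qed
  moreover have "continuous_on UNIV E2"
    unfolding E2_def by (intro continuous_intros c2)
  moreover have "bounded (range E1)"
    using bounded_linear_image[OF b1 comp_L] by (simp add: E1_def image_image)
  moreover have "bounded (range E2)"
    using bounded_linear_image[OF b2 post_comp_L_blin] by (simp add: E2_def image_image)
  ultimately show ?thesis
    unfolding C2_bounded_derivs_def by blast
qed

lemma C2_bounded_derivs_add:
  fixes f g :: "'a::euclidean_space \<Rightarrow> 'b::real_normed_vector"
  assumes f: "C2_bounded_derivs f" and g: "C2_bounded_derivs g"
  shows "C2_bounded_derivs (\<lambda>y. f y + g y)"
proof -
  obtain D1 :: "'a \<Rightarrow> 'a \<Rightarrow>\<^sub>L 'b" and D2 :: "'a \<Rightarrow> 'a \<Rightarrow>\<^sub>L ('a \<Rightarrow>\<^sub>L 'b)" where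
    d1: "\<And>y. (f has_derivative blinfun_apply (D1 y)) (at y)" and
    d2: "\<And>y. (D1 has_derivative blinfun_apply (D2 y)) (at y)" and
    c2: "continuous_on UNIV D2" and b1: "bounded (range D1)" and b2: "bounded (range D2)"
    using f unfolding C2_bounded_derivs_def by blast
  obtain F1 :: "'a \<Rightarrow> 'a \<Rightarrow>\<^sub>L 'b" and F2 :: "'a \<Rightarrow> 'a \<Rightarrow>\<^sub>L ('a \<Rightarrow>\<^sub>L 'b)" where
    f1: "\<And>y. (g has_derivative blinfun_apply (F1 y)) (at y)" and
    f2: "\<And>y. (F1 has_derivative blinfun_apply (F2 y)) (at y)" and
    cf2: "continuous_on UNIV F2" and bf1: "bounded (range F1)" and bf2: "bounded (range F2)"
    using g unfolding C2_bounded_derivs_def by blast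
  have "((\<lambda>y. f y + g y) has_derivative blinfun_apply (D1 y + F1 y)) (at y)" for y
    using has_derivative_add[OF d1 f1] by (simp add: plus_blinfun.rep_eq[abs_def])
  moreover have "((\<lambda>y. D1 y + F1 y) has_derivative blinfun_apply (D2 y + F2 y)) (at y)" for y
    using has_derivative_add[OF d2 f2] by (simp add: plus_blinfun.rep_eq[abs_def])
  moreover have "continuous_on UNIV (\<lambda>y. D2 y + F2 y)"
    by (intro continuous_intros c2 cf2)
  moreover have "bounded (range (\<lambda>y. D1 y + F1 y))" "bounded (range (\<lambda>y. D2 y + F2 y))"
    using bounded_plus_comp[OF b1 bf1] bounded_plus_comp[OF b2 bf2] by auto
  ultimately show ?thesis
    unfolding C2_bounded_derivs_def
    by (intro exI[of _ "\<lambda>y. D1 y + F1 y"] exI[of _ "\<lambda>y. D2 y + F2 y"]) blast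
qed

lemma C2_bounded_derivs_zero:
  "C2_bounded_derivs (\<lambda>y::'a::euclidean_space. 0::'b::real_normed_vector)"
  unfolding C2_bounded_derivs_def
  by (intro exI[of _ "\<lambda>y. 0"]) (auto simp: zero_blinfun.rep_eq[abs_def])

lemma C2_bounded_derivs_sum:
  fixes f :: "'i \<Rightarrow> 'a::euclidean_space \<Rightarrow> 'b::real_normed_vector"
  assumes "finite S" "\<And>i. i \<in> S \<Longrightarrow> C2_bounded_derivs (f i)"
  shows "C2_bounded_derivs (\<lambda>y. \<Sum>i\<in>S. f i y)"
  using assms
proof (induction S rule: finite_induct)
  case empty
  then show ?case by (simp add: C2_bounded_derivs_zero)
next
  case (insert x F)
  then show ?case by (simp add: C2_bounded_derivs_add)
qed

lemma C2_bounded_derivs_imp_lipschitz: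
  fixes f :: "'a::euclidean_space \<Rightarrow> 'b::real_normed_vector"
  assumes "C2_bounded_derivs f"
  shows "\<exists>L. L-lipschitz_on UNIV f"
proof -
  obtain D1 :: "'a \<Rightarrow> 'a \<Rightarrow>\<^sub>L 'b" where
    d1: "\<And>y. (f has_derivative blinfun_apply (D1 y)) (at y)" and b1: "bounded (range D1)"
    using assms unfolding C2_bounded_derivs_def by blast
  obtain B where B: "\<And>y. norm (D1 y) \<le> B"
    using b1 by (auto simp: bounded_iff)
  have "(max B 0)-lipschitz_on UNIV f"
    by (rule bounded_derivative_imp_lipschitz[where f'="\<lambda>y. blinfun_apply (D1 y)"])
       (use d1 B in \<open>auto simp: norm_blinfun.rep_eq[symmetric] intro: max.coboundedI1\<close>)
  then show ?thesis ..
qed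

lemma lipschitz_on_uniform_finite:
  fixes f :: "'i::finite \<Rightarrow> 'a::metric_space \<Rightarrow> 'b::metric_space"
  assumes "\<And>i. \<exists>L. L-lipschitz_on S (f i)"
  shows "\<exists>L. \<forall>i. L-lipschitz_on S (f i)"
proof -
  obtain L where L: "\<And>i. (L i)-lipschitz_on S (f i)"
    using assms by metis
  have "(\<Sum>k\<in>UNIV. L k)-lipschitz_on S (f i)" for i
  proof (rule lipschitz_on_le[OF L])
    show "L i \<le> (\<Sum>k\<in>UNIV. L k)"
      using L by (intro member_le_sum) (auto simp: lipschitz_on_def)
  qed
  then show ?thesis by blast
qed

lemma geometrically_bounded_series:
  fixes f :: "nat \<Rightarrow> 'b::banach"
  assumes f: "\<And>n. norm (f n) \<le> C * c ^ n" and c: "0 \<le> c" "c < 1"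
  shows "summable f" and "norm (suminf f) \<le> C / (1 - c)"
proof -
  have geom: "summable (\<lambda>n. C * c ^ n)"
    using c by (intro summable_mult summable_geometric) auto
  have norm_f: "summable (\<lambda>n. norm (f n))"
    by (rule summable_comparison_test'[OF geom]) (use f in auto)
  then show "summable f"
    by (rule summable_norm_cancel)
  have "norm (suminf f) \<le> (\<Sum>n. norm (f n))"
    by (rule summable_norm[OF norm_f])
  also have "\<dots> \<le> (\<Sum>n. C * c ^ n)"
    by (rule suminf_le[OF f norm_f geom])
  also have "\<dots> = C / (1 - c)"
    using c by (simp add: suminf_mult suminf_geometric)
  finally show "norm (suminf f) \<le> C / (1 - c)" .
qed

lemma sum_scaleR_centered:
  fixes a \<mu> :: "'j \<Rightarrow> real" and x :: "'j \<Rightarrow> 'b::real_vector"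
  assumes "(\<Sum>j\<in>A. \<mu> j *\<^sub>R x j) = 0"
  shows "(\<Sum>j\<in>A. a j *\<^sub>R x j) = (\<Sum>j\<in>A. (a j - \<mu> j) *\<^sub>R x j)"
  unfolding scaleR_diff_left sum_subtractf using assms by simp

lemma norm_sum_scaleR_le:
  fixes a :: "'j \<Rightarrow> real" and x :: "'j \<Rightarrow> 'b::real_normed_vector"
  assumes "\<And>j. j \<in> A \<Longrightarrow> norm (x j) \<le> 1"
  shows "norm (\<Sum>j\<in>A. a j *\<^sub>R x j) \<le> (\<Sum>j\<in>A. \<bar>a j\<bar>)"
proof -
  have "norm (\<Sum>j\<in>A. a j *\<^sub>R x j) \<le> (\<Sum>j\<in>A. \<bar>a j\<bar> * norm (x j))"
    using norm_sum[of "\<lambda>j. a j *\<^sub>R x j" A] by simp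
  also have "\<dots> \<le> (\<Sum>j\<in>A. \<bar>a j\<bar>)"
    using assms by (intro sum_mono) (simp add: mult_left_le)
  finally show ?thesis .
qed

lemma norm_drift_le_1:
  assumes "\<And>u. u \<in> steps \<Longrightarrow> 0 \<le> p k y u" and "(\<Sum>u\<in>steps. p k y u) = 1"
  shows "norm (drift p k y) \<le> 1"
proof -
  have "norm (drift p k y) \<le> (\<Sum>u\<in>steps. norm (p k y u *\<^sub>R u))"
    unfolding drift_def by (rule norm_sum)
  also have "\<dots> = (\<Sum>u\<in>steps. p k y u)"
    using assms(1) by (intro sum.cong) (auto simp: steps_def)
  finally show ?thesis
    using assms(2) by simp
qed

lemma C2_bounded_derivs_drift:
  assumes "\<And>u. u \<in> steps \<Longrightarrow> C2_bounded_derivs (\<lambda>y. p k y u)"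
  shows "C2_bounded_derivs (drift p k)"
proof -
  have "finite (steps :: 'a::euclidean_space set)"
    by (simp add: steps_def)
  then have "C2_bounded_derivs (\<lambda>y::'a. \<Sum>u\<in>steps. p k y u *\<^sub>R u)"
    by (intro C2_bounded_derivs_sum C2_bounded_derivs_bounded_linear[where L="\<lambda>r. r *\<^sub>R _"]
        assms bounded_linear_scaleR_left)
  then show ?thesis
    by (simp add: drift_def[abs_def])
qed

definition deviation_matrix :: "('e::finite \<Rightarrow> 'e \<Rightarrow> real) \<Rightarrow> ('e \<Rightarrow> real) \<Rightarrow> 'e \<Rightarrow> 'e \<Rightarrow> real"
  where "deviation_matrix P \<mu> i j = (\<Sum>n. matpow P n i j - \<mu> j)"

lemma vfun_eq_deviation_matrix:
  assumes summable: "\<And>i j. summable (\<lambda>n. matpow P n i j - \<mu> j)"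
    and centered: "\<And>y. (\<Sum>k\<in>UNIV. \<mu> k *\<^sub>R drift p k y) = 0"
  shows "vfun P p i y = (\<Sum>j\<in>UNIV. deviation_matrix P \<mu> i j *\<^sub>R drift p j y)"
proof -
  have "vfun P p i y = (\<Sum>n. \<Sum>j\<in>UNIV. (matpow P n i j - \<mu> j) *\<^sub>R drift p j y)"
    unfolding vfun_def by (intro arg_cong[where f=suminf] ext sum_scaleR_centered centered)
  also have "\<dots> = (\<Sum>j\<in>UNIV. \<Sum>n. (matpow P n i j - \<mu> j) *\<^sub>R drift p j y)"
    by (intro suminf_sum summable_scaleR_left summable)
  also have "\<dots> = (\<Sum>j\<in>UNIV. deviation_matrix P \<mu> i j *\<^sub>R drift p j y)"
    unfolding deviation_matrix_def by (simp add: suminf_scaleR_left[OF summable])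
  finally show ?thesis .
qed

theorem lemma4p2:
  fixes P :: "'e::finite \<Rightarrow> 'e \<Rightarrow> real"
    and \<mu> :: "'e \<Rightarrow> real"
    and \<Gamma> c :: real
    and p :: "'e \<Rightarrow> 'a::euclidean_space \<Rightarrow> 'a \<Rightarrow> real"
  assumes stoch: "stochastic P"
    and irred: "irreducible_mat P"
    and aper: "aperiodic_mat P"
    and inv: "invariant_prob P \<mu>"
    and uniq: "\<And>\<nu>. invariant_prob P \<nu> \<Longrightarrow> \<nu> = \<mu>"
    and Gamma_pos: "0 < \<Gamma>"
    and c_pos: "0 < c" and c_lt1: "c < 1"
    and mixing: "\<And>n i. (\<Sum>j\<in>UNIV. \<bar>matpow P n i j - \<mu> j\<bar>) \<le> \<Gamma> * c ^ n"
    and p_nonneg: "\<And>k y u. u \<in> steps \<Longrightarrow> 0 \<le> p k y u"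
    and p_sum: "\<And>k y. (\<Sum>u\<in>steps. p k y u) = 1"
    and p_smooth: "\<And>k u. u \<in> steps \<Longrightarrow> C2_bounded_derivs (\<lambda>y. p k y u)"
    and centered: "\<And>y. (\<Sum>k\<in>UNIV. \<mu> k *\<^sub>R drift p k y) = 0"
  shows "(\<forall>i y. summable (\<lambda>n. \<Sum>j\<in>UNIV. matpow P n i j *\<^sub>R drift p j y))
       \<and> (\<forall>i y. norm (vfun P p i y) \<le> \<Gamma> / (1 - c))
       \<and> (\<forall>i. C2_bounded_derivs (vfun P p i))
       \<and> (\<exists>L. \<forall>i. L-lipschitz_on UNIV (vfun P p i))"
proof -
  have term_le: "norm (\<Sum>j\<in>UNIV. matpow P n i j *\<^sub>R drift p j y) \<le> \<Gamma> * c ^ n" for n i y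
    by (subst sum_scaleR_centered[OF centered])
       (rule order_trans[OF norm_sum_scaleR_le[OF norm_drift_le_1[OF p_nonneg p_sum]] mixing])
  have c_ge0: "0 \<le> c"
    using c_pos by simp
  have summable: "summable (\<lambda>n. \<Sum>j\<in>UNIV. matpow P n i j *\<^sub>R drift p j y)" for i y
    by (rule geometrically_bounded_series(1)[OF term_le c_ge0 c_lt1])
  have bounded: "norm (vfun P p i y) \<le> \<Gamma> / (1 - c)" for i y
    unfolding vfun_def by (rule geometrically_bounded_series(2)[OF term_le c_ge0 c_lt1])
  have entry_le: "norm (matpow P n i j - \<mu> j) \<le> \<Gamma> * c ^ n" for n i j
    using member_le_sum[of j UNIV "\<lambda>j. \<bar>matpow P n i j - \<mu> j\<bar>"] mixing[of n i] by simp
  have entry_summable: "summable (\<lambda>n. matpow P n i j - \<mu> j)" for i j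
    by (rule geometrically_bounded_series(1)[OF entry_le c_ge0 c_lt1])
  have vfun_eq: "vfun P p i = (\<lambda>y. \<Sum>j\<in>UNIV. deviation_matrix P \<mu> i j *\<^sub>R drift p j y)" for i
    by (intro ext vfun_eq_deviation_matrix[OF entry_summable centered])
  have C2: "C2_bounded_derivs (vfun P p i)" for i
    unfolding vfun_eq
    by (intro C2_bounded_derivs_sum C2_bounded_derivs_bounded_linear[where L="scaleR _"]
        C2_bounded_derivs_drift p_smooth bounded_linear_scaleR_right) simp
  have "\<exists>L. \<forall>i. L-lipschitz_on UNIV (vfun P p i)"
    by (intro lipschitz_on_uniform_finite C2_bounded_derivs_imp_lipschitz C2)
  with summable bounded C2 show ?thesis
    by blast
qed

end
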